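(* Let $X$ be a vector space and let $Y_\rho$ be a $\rho$-complete modular space associated with a convex modular $\rho$. Let $\varepsilon>0$ and let $\phi: X\to Y_\rho$ be a mapping with $\phi(0)=0$ and $$\rho\big(\phi(x+y-z)+\phi(x+z-y)+\phi(y+z-x)-\phi(x-y)-\phi(x-z)-\phi(z-y)-\phi(x)-\phi(y)-\phi(z)\big) \le \varepsilon$$ for all $x,y,z\in X$. Then there exists a unique quadratic mapping $h: X\to Y_\rho$ such that $$\rho(\phi(x)-h(x)) \le \frac{\varepsilon}{3} \quad\text{for all } x\in X.$$
   Context: A convex modular on a vector space $Y$ is a functional $\rho: Y\to[0,\infty)$ such that for all $u,v\in Y$: (i) $\rho(u)=0$ iff $u=0$; (ii) $\rho(\lambda u)=\rho(u)$ for every scalar $\lambda$ with $|\lambda|=1$; (iii) $\rho(a u+b v)\le a\rho(u)+b\rho(v)$ whenever $a,b\ge 0$ and $a+b=1$. The associated modular space is $Y_\rho=\{u\in Y: \rho(\lambda u)\to 0 \text{ as } \lambda\to 0\}$. A sequence $\{u_n\}$ in $Y_\rho$ is $\rho$-convergent to $u$ if $\rho(u_n-u)\to 0$; it is $\rho$-Cauchy if $\rho(u_n-u_m)\to0$ as $n,m\to\infty$; $Y_\rho$ is $\rho$-complete if every $\rho$-Cauchy sequence in $Y_\rho$ is $\rho$-convergent. A mapping $h: X\to Y_\rho$ is quadratic if $h(x+y)+h(x-y)=2h(x)+2h(y)$ for all $x,y\in X$. *)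

theory Defs
  imports Complex_Main
begin

definition convex_modular :: "('b::real_vector \<Rightarrow> real) \<Rightarrow> bool" where
  "convex_modular \<rho> \<longleftrightarrow>
     (\<forall>u. \<rho> u \<ge> 0) \<and>
     (\<forall>u. \<rho> u = 0 \<longleftrightarrow> u = 0) \<and>
     (\<forall>u (l::real). \<bar>l\<bar> = 1 \<longrightarrow> \<rho> (l *\<^sub>R u) = \<rho> u) \<and>
     (\<forall>u v (a::real) b. a \<ge> 0 \<and> b \<ge> 0 \<and> a + b = 1 \<longrightarrow>
          \<rho> (a *\<^sub>R u + b *\<^sub>R v) \<le> a * \<rho> u + b * \<rho> v)"

definition modular_space :: "('b::real_vector \<Rightarrow> real) \<Rightarrow> 'b set" where
  "modular_space \<rho> = {u. ((\<lambda>l::real. \<rho> (l *\<^sub>R u)) \<longlongrightarrow> 0) (at 0)}"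

definition rho_cauchy :: "('b::real_vector \<Rightarrow> real) \<Rightarrow> (nat \<Rightarrow> 'b) \<Rightarrow> bool" where
  "rho_cauchy \<rho> u \<longleftrightarrow> (\<forall>e>0. \<exists>N. \<forall>n\<ge>N. \<forall>m\<ge>N. \<rho> (u n - u m) < e)"

definition rho_convergent_to :: "('b::real_vector \<Rightarrow> real) \<Rightarrow> (nat \<Rightarrow> 'b) \<Rightarrow> 'b \<Rightarrow> bool" where
  "rho_convergent_to \<rho> u x \<longleftrightarrow> (\<lambda>n. \<rho> (u n - x)) \<longlonglongrightarrow> 0"

definition rho_complete :: "('b::real_vector \<Rightarrow> real) \<Rightarrow> bool" where
  "rho_complete \<rho> \<longleftrightarrow>
     (\<forall>u. (\<forall>n. u n \<in> modular_space \<rho>) \<and> rho_cauchy \<rho> u \<longrightarrow>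
          (\<exists>x\<in>modular_space \<rho>. rho_convergent_to \<rho> u x))"

definition quadratic_map :: "('a::real_vector \<Rightarrow> 'b::real_vector) \<Rightarrow> bool" where
  "quadratic_map h \<longleftrightarrow> (\<forall>x y. h (x + y) + h (x - y) = 2 *\<^sub>R h x + 2 *\<^sub>R h y)"

end

theory Submission
  imports Defs
begin

text \<open>The Hyers sequence \<open>g\<^sub>n x = \<phi> (2\<^sup>n x) / 4\<^sup>n\<close> satisfies
  \<open>\<rho> (3 (\<phi> x - g\<^sub>n x)) \<le> \<epsilon>\<close>, because \<open>x, 0, x\<close> in the hypothesis gives
  \<open>\<rho> (4 \<phi> x - \<phi> (2x)) \<le> \<epsilon>\<close> and \<open>\<phi> x - g\<^sub>n\<^sub>+\<^sub>1 x\<close> is a convex combination of that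
  defect and of the previous error at \<open>2x\<close>. Since \<open>\<rho>\<close> is only convex, not homogeneous,
  constants cannot be pulled out of \<open>\<rho>\<close>; this is why one takes the \<open>\<rho>\<close>-limit \<open>L\<close> of
  \<open>(3/2) g\<^sub>n\<close> rather than of \<open>g\<^sub>n\<close>, so that \<open>\<phi> - (2/3) L\<close> is the convex combination
  \<open>(1/3) \<cdot> 3 (\<phi> - g\<^sub>n) + (2/3) ((3/2) g\<^sub>n - L)\<close>. Uniqueness: two quadratic
  approximations differ at \<open>x\<close> by \<open>4\<^sup>-\<^sup>n\<close> times their difference at \<open>2\<^sup>n x\<close>.\<close>

lemma convex_modular_nonneg: "convex_modular \<rho> \<Longrightarrow> \<rho> u \<ge> 0"
  unfolding convex_modular_def by blast

lemma convex_modular_eq_0_iff: "convex_modular \<rho> \<Longrightarrow> \<rho> u = 0 \<longleftrightarrow> u = 0"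
  unfolding convex_modular_def by blast

lemma convex_modular_0 [simp]: "convex_modular \<rho> \<Longrightarrow> \<rho> 0 = 0"
  by (simp add: convex_modular_eq_0_iff)

lemma convex_modular_minus: "convex_modular \<rho> \<Longrightarrow> \<rho> (- u) = \<rho> u"
  unfolding convex_modular_def by (metis abs_minus_cancel abs_one scaleR_minus1_left)

lemma convex_modular_minus_commute: "convex_modular \<rho> \<Longrightarrow> \<rho> (u - v) = \<rho> (v - u)"
  by (metis convex_modular_minus minus_diff_eq)

lemma convex_modular_convex:
  "\<lbrakk>convex_modular \<rho>; a \<ge> 0; b \<ge> 0; a + b = 1\<rbrakk> \<Longrightarrow>
     \<rho> (a *\<^sub>R u + b *\<^sub>R v) \<le> a * \<rho> u + b * \<rho> v"
  unfolding convex_modular_def by blast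

lemma convex_modular_scaleR_le:
  assumes "convex_modular \<rho>" "0 \<le> a" "a \<le> 1"
  shows "\<rho> (a *\<^sub>R u) \<le> a * \<rho> u"
  using convex_modular_convex[OF assms(1,2), of "1 - a" u 0] assms by simp

lemma convex_modular_scaleR_abs_le:
  assumes "convex_modular \<rho>" "\<bar>a\<bar> \<le> 1"
  shows "\<rho> (a *\<^sub>R u) \<le> \<bar>a\<bar> * \<rho> u"
proof (cases "a \<ge> 0")
  case True
  then show ?thesis using convex_modular_scaleR_le[OF assms(1)] assms(2) by simp
next
  case False
  then have "a *\<^sub>R u = - (\<bar>a\<bar> *\<^sub>R u)" by simp
  then show ?thesis
    using convex_modular_scaleR_le[OF assms(1), of "\<bar>a\<bar>" u] assms convex_modular_minus[OF assms(1)] by simp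
qed

lemma convex_modular_subconvex:
  assumes cm: "convex_modular \<rho>" and "a \<ge> 0" "b \<ge> 0" "a + b \<le> 1"
  shows "\<rho> (a *\<^sub>R u + b *\<^sub>R v) \<le> a * \<rho> u + b * \<rho> v"
proof (cases "a + b = 0")
  case True
  then have "a = 0" "b = 0" using assms by auto
  then show ?thesis using cm by simp
next
  case False
  define s where "s = a + b"
  have s: "0 < s" "s \<le> 1" using False assms unfolding s_def by auto
  have "\<rho> (a *\<^sub>R u + b *\<^sub>R v) = \<rho> (s *\<^sub>R ((a/s) *\<^sub>R u + (b/s) *\<^sub>R v))"
    using s by (simp add: scaleR_add_right)
  also have "\<dots> \<le> s * \<rho> ((a/s) *\<^sub>R u + (b/s) *\<^sub>R v)"
    using convex_modular_scaleR_le[OF cm] s by simp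
  also have "\<dots> \<le> s * ((a/s) * \<rho> u + (b/s) * \<rho> v)"
    using s assms
    by (intro mult_left_mono convex_modular_convex[OF cm]) (auto simp: s_def add_divide_distrib[symmetric])
  also have "\<dots> = a * \<rho> u + b * \<rho> v" using s by (simp add: field_simps)
  finally show ?thesis .
qed

lemma convex_modular_sum_list_le:
  assumes cm: "convex_modular \<rho>"
  shows "\<lbrakk>0 \<le> c; c * real (length us) \<le> 1\<rbrakk> \<Longrightarrow> \<rho> (c *\<^sub>R sum_list us) \<le> c * sum_list (map \<rho> us)"
proof (induction us arbitrary: c)
  case Nil
  then show ?case using cm by simp
next
  case (Cons u us)
  show ?case
  proof (cases "us = []")
    case True
    then show ?thesis using Cons.prems convex_modular_scaleR_le[OF cm, of c u] by simp
  next
    case False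
    define n where "n = real (length us)"
    have n: "n \<ge> 1" using False unfolding n_def by (cases us) auto
    have IH: "\<rho> ((1/n) *\<^sub>R sum_list us) \<le> (1/n) * sum_list (map \<rho> us)"
      using Cons.IH[of "1/n"] n unfolding n_def by simp
    have "\<rho> (c *\<^sub>R sum_list (u # us)) = \<rho> (c *\<^sub>R u + (c * n) *\<^sub>R ((1/n) *\<^sub>R sum_list us))"
      using n by (simp add: scaleR_add_right)
    also have "\<dots> \<le> c * \<rho> u + (c * n) * \<rho> ((1/n) *\<^sub>R sum_list us)"
      using Cons.prems n
      by (intro convex_modular_subconvex[OF cm]) (auto simp: n_def algebra_simps)
    also have "\<dots> \<le> c * \<rho> u + (c * n) * ((1/n) * sum_list (map \<rho> us))"
      using IH Cons.prems n by (intro add_left_mono mult_left_mono) auto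
    also have "\<dots> = c * sum_list (map \<rho> (u # us))" using n by (simp add: algebra_simps)
    finally show ?thesis .
  qed
qed

lemma convex_modular_eq_0_if_bounded_by_null:
  assumes cm: "convex_modular \<rho>" and le: "\<And>n. \<rho> u \<le> b n" and b: "b \<longlonglongrightarrow> 0"
  shows "u = 0"
proof -
  have "\<rho> u \<le> 0" using le by (intro LIMSEQ_le_const[OF b]) auto
  then show ?thesis using convex_modular_nonneg[OF cm, of u] convex_modular_eq_0_iff[OF cm] by simp
qed

lemma convex_modular_tendsto_scaleR:
  assumes cm: "convex_modular \<rho>" and "\<bar>c\<bar> \<le> 1" and lim: "(\<lambda>n. \<rho> (u n)) \<longlonglongrightarrow> 0"
  shows "(\<lambda>n. \<rho> (c *\<^sub>R u n)) \<longlonglongrightarrow> 0"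
proof (rule tendsto_sandwich[of "\<lambda>_. 0" _ _ "\<lambda>n. \<bar>c\<bar> * \<rho> (u n)"])
  show "((\<lambda>n. \<bar>c\<bar> * \<rho> (u n)) \<longlongrightarrow> 0) sequentially"
    by (rule tendsto_mult_right_zero[OF lim])
qed (use assms convex_modular_nonneg[OF cm] convex_modular_scaleR_abs_le[OF cm] in auto)

lemma convex_modular_in_modular_space:
  assumes cm: "convex_modular \<rho>"
  shows "u \<in> modular_space \<rho>"
  unfolding modular_space_def mem_Collect_eq
  proof (rule tendsto_sandwich[of "\<lambda>_. 0" _ _ "\<lambda>l. \<bar>l\<bar> * \<rho> u"])
    show "\<forall>\<^sub>F l in at 0. \<rho> (l *\<^sub>R u) \<le> \<bar>l\<bar> * \<rho> u"
      unfolding eventually_at using convex_modular_scaleR_abs_le[OF cm]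
      by (intro exI[of _ 1]) (auto simp: dist_real_def)
    show "((\<lambda>l. \<bar>l\<bar> * \<rho> u) \<longlongrightarrow> 0) (at 0)"
      by (intro tendsto_mult_left_zero tendsto_rabs_zero tendsto_ident_at)
  qed (use convex_modular_nonneg[OF cm] in auto)

lemma rho_cauchy_if_geometric_bound:
  assumes cm: "convex_modular \<rho>" and q: "\<bar>q\<bar> < 1"
    and bound: "\<And>m j. \<rho> (u m - u (m + j)) \<le> C * q ^ m"
  shows "rho_cauchy \<rho> u"
  unfolding rho_cauchy_def
proof (intro allI impI)
  fix e :: real assume "e > 0"
  have "(\<lambda>m. C * q ^ m) \<longlonglongrightarrow> 0"
    by (intro tendsto_mult_right_zero LIMSEQ_abs_realpow_zero2 q)
  then obtain N where N: "\<And>m. m \<ge> N \<Longrightarrow> C * q ^ m < e"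
    using \<open>e > 0\<close> by (metis (no_types, lifting) eventually_sequentially order_tendstoD(2))
  have "\<rho> (u n - u m) < e" if "n \<ge> N" "m \<ge> N" "n \<le> m" for n m
    using bound[of n "m - n"] N[of n] that by simp
  then show "\<exists>N. \<forall>n\<ge>N. \<forall>m\<ge>N. \<rho> (u n - u m) < e"
    by (metis convex_modular_minus_commute[OF cm] nle_le)
qed

definition quadratic_defect :: "('a::real_vector \<Rightarrow> 'b::real_vector) \<Rightarrow> 'a \<Rightarrow> 'a \<Rightarrow> 'a \<Rightarrow> 'b" where
  "quadratic_defect f x y z = f (x + y - z) + f (x + z - y) + f (y + z - x)
     - f (x - y) - f (x - z) - f (z - y) - f x - f y - f z"

definition hyers_rescale :: "('a::real_vector \<Rightarrow> 'b::real_vector) \<Rightarrow> nat \<Rightarrow> 'a \<Rightarrow> 'b" where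
  "hyers_rescale f n x = (1 / 4 ^ n) *\<^sub>R f ((2::real) ^ n *\<^sub>R x)"

lemma hyers_rescale_0 [simp]: "hyers_rescale f 0 = f"
  by (simp add: hyers_rescale_def fun_eq_iff)

lemma hyers_rescale_add:
  "hyers_rescale f (m + j) x = (1 / 4 ^ m) *\<^sub>R hyers_rescale f j ((2::real) ^ m *\<^sub>R x)"
  by (simp add: hyers_rescale_def power_add mult.commute)

lemma quadratic_defect_hyers_rescale:
  "quadratic_defect (hyers_rescale f n) x y z =
     (1 / 4 ^ n) *\<^sub>R quadratic_defect f ((2::real) ^ n *\<^sub>R x) ((2::real) ^ n *\<^sub>R y) ((2::real) ^ n *\<^sub>R z)"
  by (simp add: quadratic_defect_def hyers_rescale_def algebra_simps)

lemma quadratic_defect_double: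
  fixes f :: "'a::real_vector \<Rightarrow> 'b::real_vector"
  assumes "f 0 = 0"
  shows "quadratic_defect f x 0 x = f (2 *\<^sub>R x) - 4 *\<^sub>R f x"
proof -
  have "(4::real) *\<^sub>R v = v + v + v + v" for v :: 'b
    using scaleR_add_left[of 2 2 v] by (simp add: scaleR_2)
  then show ?thesis by (simp add: quadratic_defect_def assms scaleR_2)
qed

lemma quadratic_map_if_quadratic_defect_eq_0:
  fixes f :: "'a::real_vector \<Rightarrow> 'b::real_vector"
  assumes D: "\<And>x y z. quadratic_defect f x y z = 0"
  shows "quadratic_map f"
proof -
  have "(3::real) *\<^sub>R v = v + v + v" for v :: 'b
    using scaleR_add_left[of 2 1 v] by (simp add: scaleR_2)
  then have "quadratic_defect f 0 0 0 = - (3::real) *\<^sub>R f 0"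
    by (simp add: quadratic_defect_def algebra_simps)
  then have f0: "f 0 = 0" using D[of 0 0 0] by simp
  have "f (x + y) + f (x - y) - (2 *\<^sub>R f x + 2 *\<^sub>R f y) =
      quadratic_defect f 0 x y + quadratic_defect f x 0 0 + quadratic_defect f y 0 0" for x y
    by (simp add: quadratic_defect_def f0 scaleR_2 algebra_simps)
  then show ?thesis unfolding quadratic_map_def using D by simp
qed

lemma quadratic_map_scaleR_pow2:
  assumes q: "quadratic_map h"
  shows "h ((2::real) ^ n *\<^sub>R x) = 4 ^ n *\<^sub>R h x"
proof -
  have "h 0 + h 0 = 2 *\<^sub>R h 0 + 2 *\<^sub>R h 0"
    using q[unfolded quadratic_map_def, rule_format, of 0 0] by simp
  then have "(2::real) *\<^sub>R h 0 = 0" by (simp add: scaleR_2)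
  then have h0: "h 0 = 0" by simp
  have double: "h (2 *\<^sub>R y) = 4 *\<^sub>R h y" for y
    using q[unfolded quadratic_map_def, rule_format, of y y] h0
    by (simp add: scaleR_2[symmetric] scaleR_add_left[symmetric])
  show ?thesis
  proof (induction n)
    case (Suc n)
    have "h ((2::real) ^ Suc n *\<^sub>R x) = h (2 *\<^sub>R ((2::real) ^ n *\<^sub>R x))" by simp
    also have "\<dots> = 4 *\<^sub>R h ((2::real) ^ n *\<^sub>R x)" by (rule double)
    also have "\<dots> = 4 ^ Suc n *\<^sub>R h x" using Suc.IH by simp
    finally show ?case .
  qed simp
qed

lemma quadratic_defect_eq_0_if_rho_limit:
  assumes cm: "convex_modular \<rho>"
    and conv: "\<And>p. (\<lambda>m. \<rho> (g m p - h p)) \<longlonglongrightarrow> 0"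
    and defect: "(\<lambda>m. \<rho> (quadratic_defect (g m) x y z)) \<longlonglongrightarrow> 0"
  shows "quadratic_defect h x y z = 0"
proof -
  have conv': "(\<lambda>m. \<rho> (h p - g m p)) \<longlonglongrightarrow> 0" for p
    using conv[of p] by (simp add: convex_modular_minus_commute[OF cm, of "h p"])
  define us where "us m = [quadratic_defect (g m) x y z,
    h (x + y - z) - g m (x + y - z), h (x + z - y) - g m (x + z - y), h (y + z - x) - g m (y + z - x),
    g m (x - y) - h (x - y), g m (x - z) - h (x - z), g m (z - y) - h (z - y),
    g m x - h x, g m y - h y, g m z - h z]" for m
  have "\<rho> ((1/10) *\<^sub>R quadratic_defect h x y z) \<le> (1/10) * sum_list (map \<rho> (us m))" for m
  proof -
    have "sum_list (us m) = quadratic_defect h x y z"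
      unfolding us_def quadratic_defect_def by (simp add: algebra_simps)
    then show ?thesis using convex_modular_sum_list_le[OF cm, of "1/10" "us m"] by (simp add: us_def)
  qed
  moreover have "(\<lambda>m. (1/10) * sum_list (map \<rho> (us m))) \<longlonglongrightarrow> 0"
    unfolding us_def by (auto intro!: tendsto_add_zero tendsto_mult_right_zero conv conv' defect)
  ultimately have "(1/10 :: real) *\<^sub>R quadratic_defect h x y z = 0"
    by (rule convex_modular_eq_0_if_bounded_by_null[OF cm])
  then show ?thesis by simp
qed

lemma quadratic_map_approx_unique:
  assumes cm: "convex_modular \<rho>" and q1: "quadratic_map h1" and q2: "quadratic_map h2"
    and b1: "\<And>x. \<rho> (\<phi> x - h1 x) \<le> c" and b2: "\<And>x. \<rho> (\<phi> x - h2 x) \<le> c"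
  shows "h1 = h2"
proof
  fix x
  have "\<rho> (h1 x - h2 x) \<le> 2 * c * (1/4) ^ Suc n" for n
  proof -
    define y where "y = (2::real) ^ Suc n *\<^sub>R x"
    define a :: real where "a = (1/4) ^ Suc n"
    have a: "0 \<le> a" "a + a \<le> 1"
      unfolding a_def using power_le_one[of "1/4::real" n] by auto
    have "h1 x - h2 x = a *\<^sub>R (h1 y - \<phi> y) + a *\<^sub>R (\<phi> y - h2 y)"
      unfolding y_def a_def quadratic_map_scaleR_pow2[OF q1] quadratic_map_scaleR_pow2[OF q2]
      by (simp add: algebra_simps power_one_over)
    then have "\<rho> (h1 x - h2 x) \<le> a * \<rho> (h1 y - \<phi> y) + a * \<rho> (\<phi> y - h2 y)"
      using convex_modular_subconvex[OF cm a(1) a(1) a(2)] by simp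
    also have "\<rho> (h1 y - \<phi> y) = \<rho> (\<phi> y - h1 y)"
      by (rule convex_modular_minus_commute[OF cm])
    also have "a * \<rho> (\<phi> y - h1 y) + a * \<rho> (\<phi> y - h2 y) \<le> a * c + a * c"
      using b1 b2 a by (intro add_mono mult_left_mono) auto
    finally show ?thesis by (simp add: a_def)
  qed
  moreover have "(\<lambda>n. 2 * c * (1/4::real) ^ Suc n) \<longlonglongrightarrow> 0"
    by (intro tendsto_mult_right_zero LIMSEQ_Suc LIMSEQ_power_zero) simp
  ultimately have "h1 x - h2 x = 0"
    by (rule convex_modular_eq_0_if_bounded_by_null[OF cm])
  then show "h1 x = h2 x" by simp
qed

context
  fixes \<rho> :: "'b::real_vector \<Rightarrow> real" and \<phi> :: "'a::real_vector \<Rightarrow> 'b" and \<epsilon> :: real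
  assumes cm: "convex_modular \<rho>"
    and \<phi>_0: "\<phi> 0 = 0"
    and defect: "\<And>x y z. \<rho> (quadratic_defect \<phi> x y z) \<le> \<epsilon>"
begin

lemma hyers_rescale_error: "\<rho> (3 *\<^sub>R (\<phi> x - hyers_rescale \<phi> n x)) \<le> \<epsilon>"
proof (induction n arbitrary: x)
  case 0
  have "0 \<le> \<epsilon>" using defect[of 0 0 0] convex_modular_nonneg[OF cm] by (meson order_trans)
  then show ?case using cm by simp
next
  case (Suc n)
  have eq: "3 *\<^sub>R (\<phi> x - hyers_rescale \<phi> (Suc n) x) =
      (3/4) *\<^sub>R (4 *\<^sub>R \<phi> x - \<phi> (2 *\<^sub>R x)) + (1/4) *\<^sub>R (3 *\<^sub>R (\<phi> (2 *\<^sub>R x) - hyers_rescale \<phi> n (2 *\<^sub>R x)))"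
    using hyers_rescale_add[of \<phi> 1 n x] by (simp add: algebra_simps)
  have "\<rho> (3 *\<^sub>R (\<phi> x - hyers_rescale \<phi> (Suc n) x)) \<le>
      (3/4) * \<rho> (4 *\<^sub>R \<phi> x - \<phi> (2 *\<^sub>R x)) + (1/4) * \<rho> (3 *\<^sub>R (\<phi> (2 *\<^sub>R x) - hyers_rescale \<phi> n (2 *\<^sub>R x)))"
    unfolding eq by (rule convex_modular_convex[OF cm]) auto
  also have "\<rho> (4 *\<^sub>R \<phi> x - \<phi> (2 *\<^sub>R x)) = \<rho> (quadratic_defect \<phi> x 0 x)"
    by (simp add: quadratic_defect_double[of \<phi>, OF \<phi>_0] convex_modular_minus_commute[OF cm])
  finally show ?case using defect[of x 0 x] Suc.IH[of "2 *\<^sub>R x"] by simp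
qed

lemma hyers_rescale_cauchy_bound:
  "\<rho> ((3/2) *\<^sub>R hyers_rescale \<phi> m x - (3/2) *\<^sub>R hyers_rescale \<phi> (m + j) x) \<le> \<epsilon> / 2 * (1/4) ^ m"
proof -
  define y where "y = (2::real) ^ m *\<^sub>R x"
  define a :: real where "a = 1 / (2 * 4 ^ m)"
  have "(1::real) \<le> 4 ^ m" by (rule one_le_power) simp
  then have "(1::real) \<le> 2 * 4 ^ m" by linarith
  then have a: "0 \<le> a" "a \<le> 1" unfolding a_def by simp_all
  have "(3/2) *\<^sub>R hyers_rescale \<phi> m x - (3/2) *\<^sub>R hyers_rescale \<phi> (m + j) x =
      a *\<^sub>R (3 *\<^sub>R (\<phi> y - hyers_rescale \<phi> j y))"
    unfolding hyers_rescale_add by (simp add: hyers_rescale_def y_def a_def algebra_simps)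
  also have "\<rho> \<dots> \<le> a * \<rho> (3 *\<^sub>R (\<phi> y - hyers_rescale \<phi> j y))"
    using convex_modular_scaleR_le[OF cm a] .
  also have "\<dots> \<le> a * \<epsilon>"
    using hyers_rescale_error a by (intro mult_left_mono)
  finally show ?thesis by (simp add: a_def power_one_over)
qed

lemma hyers_rescale_defect_le: "\<rho> (quadratic_defect (hyers_rescale \<phi> n) x y z) \<le> \<epsilon> * (1/4) ^ n"
proof -
  have "\<rho> (quadratic_defect (hyers_rescale \<phi> n) x y z) \<le>
      (1 / 4 ^ n) * \<rho> (quadratic_defect \<phi> ((2::real) ^ n *\<^sub>R x) ((2::real) ^ n *\<^sub>R y) ((2::real) ^ n *\<^sub>R z))"
    unfolding quadratic_defect_hyers_rescale by (rule convex_modular_scaleR_le[OF cm]) auto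
  also have "\<dots> \<le> (1 / 4 ^ n) * \<epsilon>"
    using defect by (intro mult_left_mono) auto
  finally show ?thesis by (simp add: power_one_over mult.commute)
qed

lemma quadratic_map_approx_exists:
  assumes complete: "rho_complete \<rho>"
  shows "\<exists>h. quadratic_map h \<and> (\<forall>x. \<rho> (\<phi> x - h x) \<le> \<epsilon> / 3)"
proof -
  let ?g = "hyers_rescale \<phi>"
  have "rho_cauchy \<rho> (\<lambda>m. (3/2) *\<^sub>R ?g m x)" for x
    by (rule rho_cauchy_if_geometric_bound[OF cm _ hyers_rescale_cauchy_bound]) simp
  then have "\<forall>x. \<exists>l. (\<lambda>m. \<rho> ((3/2) *\<^sub>R ?g m x - l)) \<longlonglongrightarrow> 0"
    using complete convex_modular_in_modular_space[OF cm]
    unfolding rho_complete_def rho_convergent_to_def by blast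
  then obtain L where L: "\<And>x. (\<lambda>m. \<rho> ((3/2) *\<^sub>R ?g m x - L x)) \<longlonglongrightarrow> 0"
    by (metis choice)
  define h where "h x = (2/3::real) *\<^sub>R L x" for x
  have split: "\<phi> x - h x = (1/3) *\<^sub>R (3 *\<^sub>R (\<phi> x - ?g m x)) + (2/3) *\<^sub>R ((3/2) *\<^sub>R ?g m x - L x)"
    for m x by (simp add: h_def algebra_simps)
  have "\<rho> (\<phi> x - h x) \<le> \<epsilon> / 3" for x
  proof (rule LIMSEQ_le_const)
    show "(\<lambda>m. \<epsilon> / 3 + (2/3) * \<rho> ((3/2) *\<^sub>R ?g m x - L x)) \<longlonglongrightarrow> \<epsilon> / 3"
      using tendsto_add[OF tendsto_const tendsto_mult_right_zero[OF L[of x]], of "\<epsilon> / 3" "2/3"] by simp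
    have "\<rho> (\<phi> x - h x) \<le> \<epsilon> / 3 + (2/3) * \<rho> ((3/2) *\<^sub>R ?g m x - L x)" for m
    proof -
      have "\<rho> (\<phi> x - h x) \<le> (1/3) * \<rho> (3 *\<^sub>R (\<phi> x - ?g m x)) + (2/3) * \<rho> ((3/2) *\<^sub>R ?g m x - L x)"
        unfolding split[of x m] by (rule convex_modular_convex[OF cm]) auto
      then show ?thesis using hyers_rescale_error[of x m] by linarith
    qed
    then show "\<exists>N. \<forall>m\<ge>N. \<rho> (\<phi> x - h x) \<le> \<epsilon> / 3 + (2/3) * \<rho> ((3/2) *\<^sub>R ?g m x - L x)"
      by blast
  qed
  moreover have "quadratic_map h"
  proof (rule quadratic_map_if_quadratic_defect_eq_0, rule quadratic_defect_eq_0_if_rho_limit[OF cm])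
    show "(\<lambda>m. \<rho> (?g m p - h p)) \<longlonglongrightarrow> 0" for p
      using convex_modular_tendsto_scaleR[OF cm _ L[of p], of "2/3"] by (simp add: h_def algebra_simps)
    show "(\<lambda>m. \<rho> (quadratic_defect (?g m) x y z)) \<longlonglongrightarrow> 0" for x y z
    proof (rule tendsto_sandwich[of "\<lambda>_. 0" _ _ "\<lambda>m. \<epsilon> * (1/4) ^ m"])
      show "(\<lambda>m. \<epsilon> * (1/4::real) ^ m) \<longlonglongrightarrow> 0"
        by (intro tendsto_mult_right_zero LIMSEQ_power_zero) simp
    qed (use convex_modular_nonneg[OF cm] hyers_rescale_defect_le in auto)
  qed
  ultimately show ?thesis by blast
qed

end

theorem corollary2p2:
  fixes \<rho> :: "'b::real_vector \<Rightarrow> real"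
    and \<phi> :: "'a::real_vector \<Rightarrow> 'b"
    and \<epsilon> :: real
  assumes "convex_modular \<rho>"
    and "rho_complete \<rho>"
    and "\<epsilon> > 0"
    and "\<forall>x. \<phi> x \<in> modular_space \<rho>"
    and "\<phi> 0 = 0"
    and "\<forall>x y z. \<rho> (\<phi> (x + y - z) + \<phi> (x + z - y) + \<phi> (y + z - x)
                 - \<phi> (x - y) - \<phi> (x - z) - \<phi> (z - y) - \<phi> x - \<phi> y - \<phi> z) \<le> \<epsilon>"
  shows "\<exists>!h. (\<forall>x. h x \<in> modular_space \<rho>) \<and> quadratic_map h \<and>
              (\<forall>x. \<rho> (\<phi> x - h x) \<le> \<epsilon> / 3)"
proof -
  have defect: "\<rho> (quadratic_defect \<phi> x y z) \<le> \<epsilon>" for x y z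
    using assms(6) unfolding quadratic_defect_def by blast
  obtain h where h: "quadratic_map h" "\<forall>x. \<rho> (\<phi> x - h x) \<le> \<epsilon> / 3"
    using quadratic_map_approx_exists[OF assms(1,5) defect assms(2)] by blast
  show ?thesis
  proof (rule ex1I[of _ h])
    show "(\<forall>x. h x \<in> modular_space \<rho>) \<and> quadratic_map h \<and> (\<forall>x. \<rho> (\<phi> x - h x) \<le> \<epsilon> / 3)"
      using h convex_modular_in_modular_space[OF assms(1)] by blast
  qed (use h quadratic_map_approx_unique[OF assms(1)] in blast)
qed

end
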